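(* Suppose the predictions are stable: $\sqrt{K\,\mathrm{Var}(f^{(1)}(X)-\bar f(X)\mid f^{(1)})}\xrightarrow{L^1}0$ as $n\to\infty$. For $j\in[K]$ define $$F_j=\frac{1}{\sqrt n}\sum_{i\in I_j}\Big(f^{(j)}(X_i)-\mathbb{E}_X[f^{(j)}(X)]-\big(\bar f(X_i)-\mathbb{E}[\bar f(X)]\big)\Big).$$ Then $\sum_{j=1}^K F_j\xrightarrow{p}0$.
   Context: Setting: $(X_i,Y_i)_{i\le n}$ i.i.d. from $\mathbb{P}$; $X\sim\mathbb{P}_X$ is an independent generic feature draw. Folds $I_1,\dots,I_K$ are consecutive blocks of size $n/K$ of $\{1,\dots,n\}$; $f^{(j)}$ is the output of a possibly randomized training algorithm applied to $\{(X_i,Y_i)\}_{i\notin I_j}$ (so $f^{(j)}$ is independent of $(X_i)_{i\in I_j}$); $\bar f(x)=\mathbb{E}[f^{(1)}(x)]$. $\mathbb{E}_X$, $\mathrm{Var}_X$ denote expectation and variance over the independent draw $X$ conditionally on everything else. Second moments are finite. *)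

theory Defs
  imports "HOL-Probability.Probability"
begin

text \<open>Conventions (0-based indices). At stage m of the asymptotic sequence the sample
size is N m, the number of folds is K m, the fold size is s = N m div K m, and fold j
(for j < K m) is the block of consecutive indices {j*s ..< (j+1)*s}.\<close>

definition fold_size :: "nat \<Rightarrow> nat \<Rightarrow> nat" where
  "fold_size n k = n div k"

definition fold_idx :: "nat \<Rightarrow> nat \<Rightarrow> nat \<Rightarrow> nat set" where
  "fold_idx n k j = {j * fold_size n k ..< (j + 1) * fold_size n k}"

definition train_data :: "nat \<Rightarrow> nat \<Rightarrow> nat \<Rightarrow> (nat \<Rightarrow> 'a) \<Rightarrow> (nat \<Rightarrow> 'a)" where
  "train_data n k j d = (\<lambda>i\<in>{..< n - fold_size n k}.
      d (if i < j * fold_size n k then i else i + fold_size n k))"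

text \<open>The sample space: n i.i.d. data points from P, and independent randomisation
r_j ~ R for each fold's training run.\<close>

definition sample_space ::
  "('x \<times> 'y) measure \<Rightarrow> 'r measure \<Rightarrow> nat \<Rightarrow> nat \<Rightarrow> ((nat \<Rightarrow> 'x \<times> 'y) \<times> (nat \<Rightarrow> 'r)) measure" where
  "sample_space P R n k = (PiM {..<n} (\<lambda>_. P)) \<Otimes>\<^sub>M (PiM {..<k} (\<lambda>_. R))"

definition fitted ::
  "((nat \<Rightarrow> 'x \<times> 'y) \<Rightarrow> 'r \<Rightarrow> 'x \<Rightarrow> real) \<Rightarrow> nat \<Rightarrow> nat \<Rightarrow> nat
     \<Rightarrow> (nat \<Rightarrow> 'x \<times> 'y) \<times> (nat \<Rightarrow> 'r) \<Rightarrow> 'x \<Rightarrow> real" where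
  "fitted A n k j \<omega> = A (train_data n k j (fst \<omega>)) (snd \<omega> j)"

text \<open>fbar(x) = E[f^(1)(x)] (fold 1 is index 0).\<close>

definition fbar ::
  "('x \<times> 'y) measure \<Rightarrow> 'r measure \<Rightarrow> ((nat \<Rightarrow> 'x \<times> 'y) \<Rightarrow> 'r \<Rightarrow> 'x \<Rightarrow> real)
     \<Rightarrow> nat \<Rightarrow> nat \<Rightarrow> 'x \<Rightarrow> real" where
  "fbar P R A n k x = (\<integral>\<omega>. fitted A n k 0 \<omega> x \<partial>sample_space P R n k)"

definition varX :: "'x measure \<Rightarrow> ('x \<Rightarrow> real) \<Rightarrow> real" where
  "varX PX g = (\<integral>x. (g x - (\<integral>z. g z \<partial>PX))\<^sup>2 \<partial>PX)"

definition F_stat ::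
  "'x measure \<Rightarrow> ('x \<times> 'y) measure \<Rightarrow> 'r measure \<Rightarrow> ((nat \<Rightarrow> 'x \<times> 'y) \<Rightarrow> 'r \<Rightarrow> 'x \<Rightarrow> real)
     \<Rightarrow> nat \<Rightarrow> nat \<Rightarrow> nat \<Rightarrow> (nat \<Rightarrow> 'x \<times> 'y) \<times> (nat \<Rightarrow> 'r) \<Rightarrow> real" where
  "F_stat PX P R A n k j \<omega> =
     (1 / sqrt (real n)) * (\<Sum>i\<in>fold_idx n k j.
        fitted A n k j \<omega> (fst (fst \<omega> i)) - (\<integral>x. fitted A n k j \<omega> x \<partial>PX)
        - (fbar P R A n k (fst (fst \<omega> i)) - (\<integral>x. fbar P R A n k x \<partial>PX)))"

end

theory Submission
  imports Defs
begin

text \<open>Fix \<open>n\<close>, \<open>K\<close> and a fold \<open>j\<close>, and condition on the training data and randomisation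
  \<open>\<tau>\<close> of fold \<open>j\<close>. The \<open>n/K\<close> points of fold \<open>j\<close> are independent of \<open>\<tau>\<close> and i.i.d., and the
  summands of \<open>sqrt n * F\<^sub>j\<close> are centred functions of them, so \<open>E |F\<^sub>j| \<le> E sqrt (V \<tau> / K)\<close>,
  where \<open>V \<tau>\<close> is the variance over \<open>X\<close> of \<open>f\<^sup>(\<^sup>j\<^sup>) X - fbar X\<close>. All folds share the law of \<open>\<tau>\<close>,
  hence \<open>E |\<Sum>\<^sub>j F\<^sub>j| \<le> E sqrt (K * V \<tau>)\<close>, which tends to 0 by stability; Markov's inequality
  gives convergence in probability.\<close>

lemma sqrt_scaled_le:
  fixes s k n :: nat and V :: real
  assumes "s * k \<le> n" "0 < k" "0 \<le> V"
  shows "1 / sqrt (real n) * sqrt (real s * V) \<le> sqrt (V / real k)"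
proof (cases "n = 0")
  case True
  then show ?thesis using assms by simp
next
  case False
  have "real s * real k * V \<le> real n * V"
    using assms(1,3) by (intro mult_right_mono) (simp_all flip: of_nat_mult)
  then have "real s * V / real n \<le> V / real k"
    using False assms(2) by (simp add: divide_simps algebra_simps)
  then have "sqrt (real s * V / real n) \<le> sqrt (V / real k)"
    by (rule real_sqrt_le_mono)
  then show ?thesis
    by (simp add: real_sqrt_divide)
qed

lemma mult_sqrt_divide_self:
  fixes k v :: real
  assumes "0 < k"
  shows "k * sqrt (v / k) = sqrt (k * v)"
proof -
  have "sqrt (k * v) = sqrt (k\<^sup>2 * (v / k))"
    using assms by (simp add: power2_eq_square)
  also have "\<dots> = k * sqrt (v / k)"
    using assms by (subst real_sqrt_mult) simp
  finally show ?thesis by simp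
qed

lemma (in prob_space) square_integral_le_integral_square:
  fixes f :: "'a \<Rightarrow> real"
  assumes f: "f \<in> borel_measurable M" and f2: "integrable M (\<lambda>x. (f x)\<^sup>2)"
  shows "(\<integral>x. f x \<partial>M)\<^sup>2 \<le> (\<integral>x. (f x)\<^sup>2 \<partial>M)"
proof -
  have "variance f = (\<integral>x. (f x)\<^sup>2 \<partial>M) - (\<integral>x. f x \<partial>M)\<^sup>2"
    by (rule variance_eq[OF square_integrable_imp_integrable[OF f f2] f2])
  moreover have "0 \<le> variance f" by (simp add: integral_nonneg)
  ultimately show ?thesis by simp
qed

lemma (in finite_measure) measure_abs_gt_le_nn_integral:
  fixes f :: "'a \<Rightarrow> real"
  assumes f[measurable]: "f \<in> borel_measurable M"
    and bound: "(\<integral>\<^sup>+x. ennreal \<bar>f x\<bar> \<partial>M) \<le> ennreal B" and "0 \<le> B" and "0 < \<epsilon>"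
  shows "measure M {x \<in> space M. \<epsilon> < \<bar>f x\<bar>} \<le> B / \<epsilon>"
proof -
  define S where "S = {x \<in> space M. \<epsilon> < \<bar>f x\<bar>}"
  have S[measurable]: "S \<in> sets M" unfolding S_def by measurable
  have "ennreal \<epsilon> * emeasure M S = (\<integral>\<^sup>+x. ennreal \<epsilon> * indicator S x \<partial>M)"
    by (rule nn_integral_cmult_indicator[symmetric, OF S])
  also have "\<dots> \<le> (\<integral>\<^sup>+x. ennreal \<bar>f x\<bar> \<partial>M)"
    by (rule nn_integral_mono) (auto simp: S_def indicator_def intro!: ennreal_leI)
  finally have "ennreal (\<epsilon> * measure M S) \<le> ennreal B"
    using bound \<open>0 < \<epsilon>\<close> by (simp add: emeasure_eq_measure ennreal_mult)
  then show ?thesis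
    using assms(3,4) by (simp add: ennreal_le_iff pos_le_divide_eq mult.commute S_def)
qed

lemma norm_mult_le_sum_squares: "norm (x * y) \<le> norm ((x::real)\<^sup>2 + y\<^sup>2)"
proof -
  have "2 * (\<bar>x\<bar> * \<bar>y\<bar>) \<le> x\<^sup>2 + y\<^sup>2"
    using sum_squares_bound[of "\<bar>x\<bar>" "\<bar>y\<bar>"] by (simp add: power2_eq_square mult.assoc)
  moreover have "0 \<le> \<bar>x\<bar> * \<bar>y\<bar>" by simp
  ultimately have "\<bar>x\<bar> * \<bar>y\<bar> \<le> x\<^sup>2 + y\<^sup>2" by linarith
  then show ?thesis by (simp add: abs_mult)
qed

lemma integrable_square_diff:
  fixes f g :: "'a \<Rightarrow> real"
  assumes [measurable]: "f \<in> borel_measurable M" "g \<in> borel_measurable M"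
    and "integrable M (\<lambda>x. (f x)\<^sup>2)" "integrable M (\<lambda>x. (g x)\<^sup>2)"
  shows "integrable M (\<lambda>x. (f x - g x)\<^sup>2)"
proof (rule Bochner_Integration.integrable_bound)
  show "integrable M (\<lambda>x. 2 * (f x)\<^sup>2 + 2 * (g x)\<^sup>2)" using assms(3,4) by auto
  show "AE x in M. norm ((f x - g x)\<^sup>2) \<le> norm (2 * (f x)\<^sup>2 + 2 * (g x)\<^sup>2)"
  proof (rule AE_I2)
    fix x
    have "0 \<le> (f x + g x)\<^sup>2" by simp
    then have "(f x - g x)\<^sup>2 \<le> 2 * (f x)\<^sup>2 + 2 * (g x)\<^sup>2"
      unfolding power2_eq_square by (simp add: algebra_simps)
    then show "norm ((f x - g x)\<^sup>2) \<le> norm (2 * (f x)\<^sup>2 + 2 * (g x)\<^sup>2)" by simp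
  qed
qed simp

lemma integral_square_sum_iid:
  fixes u :: "'a \<Rightarrow> real" and I :: "'i set"
  assumes Q: "prob_space Q" and I: "finite I"
    and u[measurable]: "u \<in> borel_measurable Q"
    and u2: "integrable Q (\<lambda>z. (u z)\<^sup>2)" and u0: "(\<integral>z. u z \<partial>Q) = 0"
  shows "integrable (PiM I (\<lambda>_. Q)) (\<lambda>a. (\<Sum>i\<in>I. u (a i))\<^sup>2)"
    and "(\<integral>a. (\<Sum>i\<in>I. u (a i))\<^sup>2 \<partial>PiM I (\<lambda>_. Q)) = real (card I) * (\<integral>z. (u z)\<^sup>2 \<partial>Q)"
proof -
  interpret Q: prob_space Q by fact
  define M where "M = PiM I (\<lambda>_. Q)"
  interpret product_sigma_finite "\<lambda>_::'i. Q"
    by (simp add: product_sigma_finite_def Q.sigma_finite_measure_axioms)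
  have component: "integrable M (\<lambda>a. f (a i)) \<and> (\<integral>a. f (a i) \<partial>M) = (\<integral>z. f z \<partial>Q)"
    if "i \<in> I" "f \<in> borel_measurable Q" "integrable Q f" for i and f :: "'a \<Rightarrow> real"
  proof -
    have m: "(\<lambda>a. a i) \<in> measurable M Q" unfolding M_def using that by simp
    have "distr M Q (\<lambda>a. a i) = Q"
      unfolding M_def using distr_PiM_component[of I "\<lambda>_. Q" i] that Q by auto
    then show ?thesis
      using integrable_distr_eq[OF m, of f] integral_distr[OF m, of f] that by simp
  qed
  have product_integrable: "integrable M (\<lambda>a. u (a i) * u (a j))" if "i \<in> I" "j \<in> I" for i j
  proof (rule Bochner_Integration.integrable_bound)
    show "integrable M (\<lambda>a. (u (a i))\<^sup>2 + (u (a j))\<^sup>2)"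
      using component[OF that(1) _ u2] component[OF that(2) _ u2] by auto
    show "(\<lambda>a. u (a i) * u (a j)) \<in> borel_measurable M" unfolding M_def using that by simp
    show "AE a in M. norm (u (a i) * u (a j)) \<le> norm ((u (a i))\<^sup>2 + (u (a j))\<^sup>2)"
      by (intro AE_I2 norm_mult_le_sum_squares)
  qed
  \<comment> \<open>Distinct coordinates are independent and centred, so the cross terms vanish.\<close>
  have cross: "(\<integral>a. u (a i) * u (a j) \<partial>M) = 0" if "i \<in> I" "j \<in> I" "i \<noteq> j" for i j
  proof -
    have m: "(\<lambda>a. \<lambda>l\<in>{i, j}. a l) \<in> measurable M (PiM {i, j} (\<lambda>_. Q))"
      unfolding M_def by (intro measurable_restrict measurable_component_singleton) (use that in auto)
    have "distr M (PiM {i, j} (\<lambda>_. Q)) (\<lambda>a. \<lambda>l\<in>{i, j}. a l) = PiM {i, j} (\<lambda>_. Q)"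
      unfolding M_def using distr_PiM_reindex[of I "\<lambda>_. Q" id "{i, j}"] that Q by (simp add: Pi_iff)
    then have "(\<integral>a. u (a i) * u (a j) \<partial>M) = (\<integral>x. (\<Prod>l\<in>{i, j}. u (x l)) \<partial>PiM {i, j} (\<lambda>_. Q))"
      using integral_distr[OF m, of "\<lambda>x. \<Prod>l\<in>{i, j}. u (x l)"] that by simp
    also have "\<dots> = (\<Prod>l\<in>{i, j}. \<integral>z. u z \<partial>Q)"
      by (rule product_integral_prod) (use Q.square_integrable_imp_integrable[OF u u2] in auto)
    finally show ?thesis using u0 that by simp
  qed
  have square_eq: "(\<Sum>i\<in>I. u (a i))\<^sup>2 = (\<Sum>i\<in>I. \<Sum>j\<in>I. u (a i) * u (a j))" for a
    unfolding power2_eq_square sum_product ..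
  show "integrable (PiM I (\<lambda>_. Q)) (\<lambda>a. (\<Sum>i\<in>I. u (a i))\<^sup>2)"
    unfolding square_eq M_def[symmetric] using product_integrable by auto
  have "(\<integral>a. (\<Sum>i\<in>I. u (a i))\<^sup>2 \<partial>M) = (\<Sum>i\<in>I. \<Sum>j\<in>I. \<integral>a. u (a i) * u (a j) \<partial>M)"
    unfolding square_eq using product_integrable by (simp add: Bochner_Integration.integral_sum)
  also have "\<dots> = (\<Sum>i\<in>I. \<integral>a. u (a i) * u (a i) \<partial>M)"
  proof (rule sum.cong[OF refl])
    fix i assume i: "i \<in> I"
    have "(\<Sum>j\<in>I. \<integral>a. u (a i) * u (a j) \<partial>M) = (\<Sum>j\<in>{i}. \<integral>a. u (a i) * u (a j) \<partial>M)"
      by (rule sum.mono_neutral_right) (use I i cross in auto)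
    then show "(\<Sum>j\<in>I. \<integral>a. u (a i) * u (a j) \<partial>M) = (\<integral>a. u (a i) * u (a i) \<partial>M)" by simp
  qed
  also have "\<dots> = (\<Sum>i\<in>I. \<integral>z. (u z)\<^sup>2 \<partial>Q)"
    using component[OF _ _ u2] by (simp add: power2_eq_square)
  finally show "(\<integral>a. (\<Sum>i\<in>I. u (a i))\<^sup>2 \<partial>PiM I (\<lambda>_. Q)) = real (card I) * (\<integral>z. (u z)\<^sup>2 \<partial>Q)"
    unfolding M_def by simp
qed

lemma nn_integral_abs_sum_iid_le:
  fixes u :: "'a \<Rightarrow> real" and I :: "'i set"
  assumes Q: "prob_space Q" and I: "finite I"
    and u[measurable]: "u \<in> borel_measurable Q"
    and u2: "integrable Q (\<lambda>z. (u z)\<^sup>2)" and u0: "(\<integral>z. u z \<partial>Q) = 0"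
  shows "(\<integral>\<^sup>+a. ennreal \<bar>\<Sum>i\<in>I. u (a i)\<bar> \<partial>PiM I (\<lambda>_. Q))
          \<le> ennreal (sqrt (real (card I) * (\<integral>z. (u z)\<^sup>2 \<partial>Q)))"
proof -
  interpret M: prob_space "PiM I (\<lambda>_. Q)" by (intro prob_space_PiM Q)
  define Y where "Y a = \<bar>\<Sum>i\<in>I. u (a i)\<bar>" for a
  have Y[measurable]: "Y \<in> borel_measurable (PiM I (\<lambda>_. Q))" unfolding Y_def by measurable
  have Y2: "integrable (PiM I (\<lambda>_. Q)) (\<lambda>a. (Y a)\<^sup>2)"
    unfolding Y_def using integral_square_sum_iid(1)[OF assms] by simp
  have "(\<integral>a. Y a \<partial>PiM I (\<lambda>_. Q))\<^sup>2 \<le> real (card I) * (\<integral>z. (u z)\<^sup>2 \<partial>Q)"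
    using M.square_integral_le_integral_square[OF Y Y2] integral_square_sum_iid(2)[OF assms]
    by (simp add: Y_def)
  then have "(\<integral>a. Y a \<partial>PiM I (\<lambda>_. Q)) \<le> sqrt (real (card I) * (\<integral>z. (u z)\<^sup>2 \<partial>Q))"
    by (simp add: real_le_rsqrt)
  moreover have "(\<integral>\<^sup>+a. ennreal (Y a) \<partial>PiM I (\<lambda>_. Q)) = ennreal (\<integral>a. Y a \<partial>PiM I (\<lambda>_. Q))"
    by (rule nn_integral_eq_integral)
      (use M.square_integrable_imp_integrable[OF Y Y2] in \<open>auto simp: Y_def\<close>)
  ultimately show ?thesis unfolding Y_def by (simp add: ennreal_leI)
qed

lemma distr_reindex_pair_component:
  fixes P :: "'p measure" and R :: "'r measure" and \<sigma> :: "nat \<Rightarrow> 'i"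
  assumes P: "prob_space P" and R: "prob_space R" and inj: "inj_on \<sigma> {..<m}"
    and into: "\<sigma> \<in> {..<m} \<rightarrow> S" and j: "j < k"
  shows "distr (PiM S (\<lambda>_. P) \<Otimes>\<^sub>M PiM {..<k} (\<lambda>_. R)) (PiM {..<m} (\<lambda>_. P) \<Otimes>\<^sub>M R)
           (\<lambda>(b, r). (\<lambda>i\<in>{..<m}. b (\<sigma> i), r j)) = PiM {..<m} (\<lambda>_. P) \<Otimes>\<^sub>M R"
proof -
  have d1: "distr (PiM S (\<lambda>_. P)) (PiM {..<m} (\<lambda>_. P)) (\<lambda>b. \<lambda>i\<in>{..<m}. b (\<sigma> i))
      = PiM {..<m} (\<lambda>_. P)"
    using distr_PiM_reindex[of S "\<lambda>_. P" \<sigma> "{..<m}"] P inj into by simp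
  have d2: "distr (PiM {..<k} (\<lambda>_. R)) R (\<lambda>r. r j) = R"
    using distr_PiM_component[of "{..<k}" "\<lambda>_. R" j] R j by simp
  have m1: "(\<lambda>b. \<lambda>i\<in>{..<m}. b (\<sigma> i)) \<in> measurable (PiM S (\<lambda>_. P)) (PiM {..<m} (\<lambda>_. P))"
    by (intro measurable_restrict measurable_component_singleton) (use into in auto)
  have m2: "(\<lambda>r. r j) \<in> measurable (PiM {..<k} (\<lambda>_. R)) R"
    using j by simp
  have "sigma_finite_measure (distr (PiM {..<k} (\<lambda>_. R)) R (\<lambda>r. r j))"
    unfolding d2 using R by (simp add: prob_space_imp_sigma_finite)
  then show ?thesis
    using pair_measure_distr[OF m1 m2] d1 d2 by simp
qed

text \<open>If \<open>T\<close> only reads the \<open>J\<close>-coordinates (and the extra randomisation),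
  it is independent of the \<open>I\<close>-coordinates.\<close>

lemma nn_integral_merge_independent:
  fixes P :: "'a measure" and Q :: "'r measure" and L :: "'t measure" and I J :: "'i set"
  assumes P: "prob_space P" and Q: "prob_space Q"
    and IJ: "I \<inter> J = {}" "finite I" "finite J"
    and T_meas: "T \<in> measurable (PiM (I \<union> J) (\<lambda>_. P) \<Otimes>\<^sub>M Q) L"
    and T_J: "T \<in> measurable (PiM J (\<lambda>_. P) \<Otimes>\<^sub>M Q) L"
    and T_law: "distr (PiM J (\<lambda>_. P) \<Otimes>\<^sub>M Q) L T = L"
    and T_merge: "\<And>a b r. T (merge I J (a, b), r) = T (b, r)"
    and g[measurable]: "g \<in> borel_measurable (L \<Otimes>\<^sub>M PiM I (\<lambda>_. P))"
  shows "(\<integral>\<^sup>+\<omega>. g (T \<omega>, restrict (fst \<omega>) I) \<partial>(PiM (I \<union> J) (\<lambda>_. P) \<Otimes>\<^sub>M Q))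
       = (\<integral>\<^sup>+\<tau>. \<integral>\<^sup>+a. g (\<tau>, a) \<partial>PiM I (\<lambda>_. P) \<partial>L)"
proof -
  define PI where "PI = PiM I (\<lambda>_. P)"
  define PJ where "PJ = PiM J (\<lambda>_. P)"
  define S where "S = PiM (I \<union> J) (\<lambda>_. P) \<Otimes>\<^sub>M Q"
  interpret product_sigma_finite "\<lambda>_::'i. P"
    by (simp add: product_sigma_finite_def prob_space_imp_sigma_finite P)
  interpret Q: prob_space Q by fact
  interpret PI: prob_space PI unfolding PI_def by (intro prob_space_PiM P)
  interpret PJ: prob_space PJ unfolding PJ_def by (intro prob_space_PiM P)
  interpret IJ: pair_sigma_finite PI PJ ..
  interpret IJ_Q: pair_sigma_finite "PI \<Otimes>\<^sub>M PJ" Q ..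
  interpret J_Q: pair_sigma_finite PJ Q ..
  note [measurable] = T_meas[folded S_def] T_J[folded PJ_def] g[folded PI_def]
  have merge_pair[measurable]: "(\<lambda>(x, r). (merge I J x, r)) \<in> measurable ((PI \<Otimes>\<^sub>M PJ) \<Otimes>\<^sub>M Q) S"
    unfolding S_def PI_def PJ_def by measurable
  have S_merge: "distr ((PI \<Otimes>\<^sub>M PJ) \<Otimes>\<^sub>M Q) S (\<lambda>(x, r). (merge I J x, r)) = S"
  proof -
    have "distr (PI \<Otimes>\<^sub>M PJ) (PiM (I \<union> J) (\<lambda>_. P)) (merge I J) \<Otimes>\<^sub>M distr Q Q (\<lambda>r. r)
        = distr ((PI \<Otimes>\<^sub>M PJ) \<Otimes>\<^sub>M Q) S (\<lambda>(x, r). (merge I J x, r))"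
      unfolding S_def PI_def PJ_def
      by (rule pair_measure_distr) (simp_all add: Q.sigma_finite_measure_axioms)
    moreover have "distr (PI \<Otimes>\<^sub>M PJ) (PiM (I \<union> J) (\<lambda>_. P)) (merge I J) = PiM (I \<union> J) (\<lambda>_. P)"
      unfolding PI_def PJ_def by (rule distr_merge[OF IJ])
    ultimately show ?thesis unfolding S_def by simp
  qed
  have restrict_I[measurable]: "(\<lambda>\<omega>. restrict (fst \<omega>) I) \<in> measurable S PI"
    unfolding S_def PI_def
    by (intro measurable_restrict measurable_compose[OF measurable_fst measurable_component_singleton]) auto
  have inner[measurable]: "(\<lambda>\<tau>. \<integral>\<^sup>+a. g (\<tau>, a) \<partial>PI) \<in> borel_measurable L"
    by (rule PI.borel_measurable_nn_integral_fst) measurable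
  have g_S: "(\<lambda>\<omega>. g (T \<omega>, restrict (fst \<omega>) I)) \<in> borel_measurable S"
    by measurable
  have g_merged: "(\<lambda>z. g (T (snd (fst z), snd z), fst (fst z))) \<in> borel_measurable ((PI \<Otimes>\<^sub>M PJ) \<Otimes>\<^sub>M Q)"
    by measurable
  have "(\<integral>\<^sup>+\<omega>. g (T \<omega>, restrict (fst \<omega>) I) \<partial>S)
      = (\<integral>\<^sup>+z. g (T (merge I J (fst z), snd z), restrict (merge I J (fst z)) I) \<partial>((PI \<Otimes>\<^sub>M PJ) \<Otimes>\<^sub>M Q))"
    using nn_integral_distr[OF merge_pair, of "\<lambda>\<omega>. g (T \<omega>, restrict (fst \<omega>) I)"] g_S
    unfolding S_merge by (simp add: split_beta')
  also have "\<dots> = (\<integral>\<^sup>+z. g (T (snd (fst z), snd z), fst (fst z)) \<partial>((PI \<Otimes>\<^sub>M PJ) \<Otimes>\<^sub>M Q))"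
    by (rule nn_integral_cong) (auto simp: T_merge IJ(1) space_pair_measure PI_def space_PiM)
  also have "\<dots> = (\<integral>\<^sup>+r. \<integral>\<^sup>+x. g (T (snd x, r), fst x) \<partial>(PI \<Otimes>\<^sub>M PJ) \<partial>Q)"
    using IJ_Q.nn_integral_snd[OF g_merged] by simp
  also have "\<dots> = (\<integral>\<^sup>+r. \<integral>\<^sup>+b. \<integral>\<^sup>+a. g (T (b, r), a) \<partial>PI \<partial>PJ \<partial>Q)"
  proof (rule nn_integral_cong)
    fix r assume r: "r \<in> space Q"
    have "(\<lambda>b. T (b, r)) \<in> measurable PJ L"
      using measurable_compose[OF measurable_Pair2'[OF r] T_J[folded PJ_def]] .
    from measurable_Pair[OF measurable_compose[OF measurable_snd this] measurable_fst[of PI PJ]]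
    have "(\<lambda>x. (T (snd x, r), fst x)) \<in> measurable (PI \<Otimes>\<^sub>M PJ) (L \<Otimes>\<^sub>M PI)"
      by simp
    from measurable_compose[OF this g[folded PI_def]]
    have gT: "(\<lambda>x. g (T (snd x, r), fst x)) \<in> borel_measurable (PI \<Otimes>\<^sub>M PJ)" by simp
    show "(\<integral>\<^sup>+x. g (T (snd x, r), fst x) \<partial>(PI \<Otimes>\<^sub>M PJ)) = (\<integral>\<^sup>+b. \<integral>\<^sup>+a. g (T (b, r), a) \<partial>PI \<partial>PJ)"
      by (rule IJ.nn_integral_snd[OF gT, symmetric, simplified])
  qed
  also have "\<dots> = (\<integral>\<^sup>+y. \<integral>\<^sup>+a. g (T y, a) \<partial>PI \<partial>(PJ \<Otimes>\<^sub>M Q))"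
    by (rule J_Q.nn_integral_snd[OF measurable_compose[OF T_J[folded PJ_def] inner]])
  also have "\<dots> = (\<integral>\<^sup>+\<tau>. \<integral>\<^sup>+a. g (\<tau>, a) \<partial>PI \<partial>distr (PJ \<Otimes>\<^sub>M Q) L T)"
    by (rule nn_integral_distr[symmetric, OF T_J[folded PJ_def]]) simp
  finally show ?thesis by (simp only: S_def PI_def PJ_def T_law)
qed

locale cross_fitting =
  fixes PX :: "'x measure" and MY :: "'y measure" and P :: "('x \<times> 'y) measure"
    and R :: "'r measure" and A :: "(nat \<Rightarrow> 'x \<times> 'y) \<Rightarrow> 'r \<Rightarrow> 'x \<Rightarrow> real"
    and n k :: nat
  assumes P: "prob_space P" and sets_P: "sets P = sets (PX \<Otimes>\<^sub>M MY)"
    and PX_law: "distr P PX fst = PX" and R: "prob_space R" and k_pos: "0 < k"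
    and A_measurable: "(\<lambda>((d, r), x). A d r x) \<in> borel_measurable
        ((PiM {..< n - n div k} (\<lambda>_. P) \<Otimes>\<^sub>M R) \<Otimes>\<^sub>M PX)"
    and A_square_integrable: "integrable ((PiM {..< n - n div k} (\<lambda>_. P) \<Otimes>\<^sub>M R) \<Otimes>\<^sub>M PX)
        (\<lambda>((d, r), x). (A d r x)\<^sup>2)"
begin

abbreviation sample :: "((nat \<Rightarrow> 'x \<times> 'y) \<times> (nat \<Rightarrow> 'r)) measure" where
  "sample \<equiv> sample_space P R n k"

definition train_law :: "((nat \<Rightarrow> 'x \<times> 'y) \<times> 'r) measure" where
  "train_law = PiM {..< n - n div k} (\<lambda>_. P) \<Otimes>\<^sub>M R"

definition pred :: "((nat \<Rightarrow> 'x \<times> 'y) \<times> 'r) \<times> 'x \<Rightarrow> real" where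
  "pred z = A (fst (fst z)) (snd (fst z)) (snd z)"

definition skip :: "nat \<Rightarrow> nat \<Rightarrow> nat" where
  "skip j i = (if i < j * (n div k) then i else i + n div k)"

definition train :: "nat \<Rightarrow> (nat \<Rightarrow> 'x \<times> 'y) \<times> (nat \<Rightarrow> 'r) \<Rightarrow> (nat \<Rightarrow> 'x \<times> 'y) \<times> 'r" where
  "train j \<omega> = (\<lambda>i\<in>{..< n - n div k}. fst \<omega> (skip j i), snd \<omega> j)"

definition mean_pred :: "'x \<Rightarrow> real" where
  "mean_pred x = (\<integral>\<tau>. pred (\<tau>, x) \<partial>train_law)"

text \<open>With \<open>\<tau> = train j \<omega>\<close>, \<open>centred \<tau> (X i)\<close> is the \<open>i\<close>-th summand of \<open>F\<^sub>j\<close>.\<close>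

definition centred :: "(nat \<Rightarrow> 'x \<times> 'y) \<times> 'r \<Rightarrow> 'x \<Rightarrow> real" where
  "centred \<tau> x = pred (\<tau>, x) - (\<integral>z. pred (\<tau>, z) \<partial>PX) - (mean_pred x - (\<integral>z. mean_pred z \<partial>PX))"

definition excess_var :: "(nat \<Rightarrow> 'x \<times> 'y) \<times> 'r \<Rightarrow> real" where
  "excess_var \<tau> = varX PX (\<lambda>x. pred (\<tau>, x) - mean_pred x)"

sublocale P: prob_space P by (fact P)
sublocale R: prob_space R by (fact R)

lemma fst_measurable[measurable]: "fst \<in> measurable P PX"
  by (subst measurable_cong_sets[OF sets_P refl]) simp

sublocale PX: prob_space PX
  using P.prob_space_distr[OF fst_measurable] PX_law by simp

sublocale train_law: prob_space train_law
  unfolding train_law_def by (intro prob_space_pair prob_space_PiM P R)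

sublocale sample: prob_space sample
  unfolding sample_space_def by (intro prob_space_pair prob_space_PiM P R)

sublocale train_PX: pair_sigma_finite train_law PX ..

lemma integral_fst_law:
  fixes f :: "'x \<Rightarrow> real"
  shows "f \<in> borel_measurable PX \<Longrightarrow> (\<integral>z. f (fst z) \<partial>P) = (\<integral>x. f x \<partial>PX)"
  using integral_distr[OF fst_measurable, of f] PX_law by simp

lemma integrable_fst_law:
  fixes f :: "'x \<Rightarrow> real"
  shows "f \<in> borel_measurable PX \<Longrightarrow> integrable P (\<lambda>z. f (fst z)) \<longleftrightarrow> integrable PX f"
  using integrable_distr_eq[OF fst_measurable, of f] PX_law by simp

lemma pred_measurable[measurable]: "pred \<in> borel_measurable (train_law \<Otimes>\<^sub>M PX)"
proof -
  have "pred = (\<lambda>((d, r), x). A d r x)" by (auto simp: pred_def fun_eq_iff)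
  then show ?thesis using A_measurable by (simp add: train_law_def)
qed

lemma pred_square_integrable: "integrable (train_law \<Otimes>\<^sub>M PX) (\<lambda>(\<tau>, x). (pred (\<tau>, x))\<^sup>2)"
proof -
  have "(\<lambda>(\<tau>, x). (pred (\<tau>, x))\<^sup>2) = (\<lambda>((d, r), x). (A d r x)\<^sup>2)"
    by (auto simp: pred_def fun_eq_iff)
  then show ?thesis using A_square_integrable by (simp add: train_law_def)
qed

lemma AE_pred_square_integrable: "AE \<tau> in train_law. integrable PX (\<lambda>x. (pred (\<tau>, x))\<^sup>2)"
  using train_PX.AE_integrable_fst[OF pred_square_integrable] by simp

lemma mean_pred_measurable[measurable]: "mean_pred \<in> borel_measurable PX"
  unfolding mean_pred_def by measurable

lemma mean_pred_square_integrable: "integrable PX (\<lambda>x. (mean_pred x)\<^sup>2)"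
proof (rule Bochner_Integration.integrable_bound)
  show "integrable PX (\<lambda>x. \<integral>\<tau>. (pred (\<tau>, x))\<^sup>2 \<partial>train_law)"
    using train_PX.integrable_snd[OF pred_square_integrable] by simp
  show "(\<lambda>x. (mean_pred x)\<^sup>2) \<in> borel_measurable PX" by measurable
  show "AE x in PX. norm ((mean_pred x)\<^sup>2) \<le> norm (\<integral>\<tau>. (pred (\<tau>, x))\<^sup>2 \<partial>train_law)"
    using train_PX.AE_integrable_snd[OF pred_square_integrable]
  proof (rule AE_mp, intro AE_I2 impI)
    fix x assume "x \<in> space PX" and "integrable train_law (\<lambda>\<tau>. (pred (\<tau>, x))\<^sup>2)"
    then have "(mean_pred x)\<^sup>2 \<le> (\<integral>\<tau>. (pred (\<tau>, x))\<^sup>2 \<partial>train_law)"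
      unfolding mean_pred_def by (intro train_law.square_integral_le_integral_square) simp_all
    then show "norm ((mean_pred x)\<^sup>2) \<le> norm (\<integral>\<tau>. (pred (\<tau>, x))\<^sup>2 \<partial>train_law)" by simp
  qed
qed

lemma centred_measurable[measurable]: "(\<lambda>(\<tau>, x). centred \<tau> x) \<in> borel_measurable (train_law \<Otimes>\<^sub>M PX)"
  unfolding centred_def by measurable

lemma excess_var_measurable[measurable]: "excess_var \<in> borel_measurable train_law"
  unfolding excess_var_def varX_def by measurable

lemma excess_var_nonneg: "0 \<le> excess_var \<tau>"
  unfolding excess_var_def varX_def by (simp add: integral_nonneg)

lemma fold_idx_eq: "fold_idx n k j = {j * (n div k) ..< (j + 1) * (n div k)}"
  unfolding fold_idx_def fold_size_def ..

lemma fold_end_le: "j < k \<Longrightarrow> (j + 1) * (n div k) \<le> n"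
  by (metis Suc_eq_plus1 Suc_leI div_times_less_eq_dividend mult.commute mult_le_mono2 order_trans)

lemma fold_idx_subset: "j < k \<Longrightarrow> fold_idx n k j \<subseteq> {..<n}"
  using fold_end_le[of j] unfolding fold_idx_eq by auto

lemma card_fold_idx: "card (fold_idx n k j) = n div k"
  unfolding fold_idx_eq by simp

lemma inj_on_skip: "inj_on (skip j) {..< n - n div k}"
  unfolding inj_on_def skip_def by auto

lemma skip_outside_fold:
  "j < k \<Longrightarrow> skip j \<in> {..< n - n div k} \<rightarrow> {..<n} - fold_idx n k j"
  using fold_end_le[of j] unfolding fold_idx_eq skip_def by (auto split: if_splits)

lemma fitted_eq_pred: "fitted A n k j \<omega> x = pred (train j \<omega>, x)"
  unfolding fitted_def train_data_def fold_size_def train_def skip_def pred_def by simp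

lemma train_measurable:
  assumes "j < k" "skip j \<in> {..< n - n div k} \<rightarrow> S"
  shows "train j \<in> measurable (PiM S (\<lambda>_. P) \<Otimes>\<^sub>M PiM {..<k} (\<lambda>_. R)) train_law"
proof -
  have "(\<lambda>d. \<lambda>i\<in>{..< n - n div k}. d (skip j i))
      \<in> measurable (PiM S (\<lambda>_. P)) (PiM {..< n - n div k} (\<lambda>_. P))"
    by (intro measurable_restrict measurable_component_singleton) (use assms in auto)
  moreover have "(\<lambda>r. r j) \<in> measurable (PiM {..<k} (\<lambda>_. R)) R" using assms by simp
  ultimately show ?thesis unfolding train_def[abs_def] train_law_def by measurable
qed

lemma distr_train:
  assumes "j < k" "skip j \<in> {..< n - n div k} \<rightarrow> S"
  shows "distr (PiM S (\<lambda>_. P) \<Otimes>\<^sub>M PiM {..<k} (\<lambda>_. R)) train_law (train j) = train_law"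
  using distr_reindex_pair_component[OF P R inj_on_skip assms(2,1)]
  unfolding train_law_def train_def[abs_def] by (simp add: case_prod_beta')

lemma train_measurable_sample[measurable]: "j < k \<Longrightarrow> train j \<in> measurable sample train_law"
  unfolding sample_space_def using skip_outside_fold by (intro train_measurable) auto

lemma distr_train_sample: "j < k \<Longrightarrow> distr sample train_law (train j) = train_law"
  unfolding sample_space_def using skip_outside_fold by (intro distr_train) auto

lemma fbar_eq_mean_pred: "x \<in> space PX \<Longrightarrow> fbar P R A n k x = mean_pred x"
proof -
  assume x: "x \<in> space PX"
  have "fbar P R A n k x = (\<integral>\<tau>. pred (\<tau>, x) \<partial>distr sample train_law (train 0))"
    unfolding fbar_def fitted_eq_pred
    by (rule integral_distr[symmetric]) (use k_pos x in auto)
  then show ?thesis unfolding distr_train_sample[OF k_pos] mean_pred_def .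
qed

lemma nn_integral_abs_sum_centred_le:
  assumes I: "finite I" and \<tau>: "\<tau> \<in> space train_law"
    and \<tau>_square: "integrable PX (\<lambda>x. (pred (\<tau>, x))\<^sup>2)"
  shows "(\<integral>\<^sup>+a. ennreal \<bar>\<Sum>i\<in>I. centred \<tau> (fst (a i))\<bar> \<partial>PiM I (\<lambda>_. P))
      \<le> ennreal (sqrt (real (card I) * excess_var \<tau>))"
proof -
  define g where "g x = pred (\<tau>, x) - mean_pred x" for x
  have g[measurable]: "g \<in> borel_measurable PX" unfolding g_def using \<tau> by measurable
  have \<tau>_integrable: "integrable PX (\<lambda>x. pred (\<tau>, x))"
    by (rule PX.square_integrable_imp_integrable[OF _ \<tau>_square]) (use \<tau> in measurable)
  have mean_pred_integrable: "integrable PX mean_pred"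
    by (rule PX.square_integrable_imp_integrable[OF _ mean_pred_square_integrable]) simp
  have g2: "integrable PX (\<lambda>x. (g x)\<^sup>2)"
    unfolding g_def
    by (rule integrable_square_diff[OF _ _ \<tau>_square mean_pred_square_integrable]) (use \<tau> in measurable)
  define c where "c = (\<integral>x. g x \<partial>PX)"
  have centred_eq: "centred \<tau> x = g x - c" for x
    unfolding centred_def g_def c_def using \<tau>_integrable mean_pred_integrable
    by (simp add: Bochner_Integration.integral_diff)
  have gc2: "integrable PX (\<lambda>x. (g x - c)\<^sup>2)"
    by (rule integrable_square_diff[OF g _ g2]) simp_all
  define u :: "'x \<times> 'y \<Rightarrow> real" where "u z = centred \<tau> (fst z)" for z
  have u[measurable]: "u \<in> borel_measurable P" unfolding u_def centred_eq by measurable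
  have u2: "integrable P (\<lambda>z. (u z)\<^sup>2)"
    unfolding u_def centred_eq using integrable_fst_law[of "\<lambda>x. (g x - c)\<^sup>2"] gc2 by simp
  have u0: "(\<integral>z. u z \<partial>P) = 0"
    unfolding u_def centred_eq using integral_fst_law[of "\<lambda>x. g x - c"] PX.square_integrable_imp_integrable[OF g g2]
    by (simp add: c_def Bochner_Integration.integral_diff PX.prob_space)
  have "excess_var \<tau> = (\<integral>x. (g x - c)\<^sup>2 \<partial>PX)"
    unfolding excess_var_def varX_def g_def c_def ..
  also have "\<dots> = (\<integral>z. (u z)\<^sup>2 \<partial>P)"
    unfolding u_def centred_eq by (rule integral_fst_law[symmetric]) measurable
  finally have "excess_var \<tau> = (\<integral>z. (u z)\<^sup>2 \<partial>P)" .
  then show ?thesis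
    using nn_integral_abs_sum_iid_le[OF P I u u2 u0] unfolding u_def by simp
qed

lemma fst_component_space:
  assumes "\<omega> \<in> space sample" "i < n"
  shows "fst (fst \<omega> i) \<in> space PX"
proof -
  have "fst \<omega> i \<in> space P"
    using assms by (auto simp: sample_space_def space_pair_measure space_PiM)
  then show ?thesis using measurable_space[OF fst_measurable] by blast
qed

lemma component_measurable[measurable]: "i < n \<Longrightarrow> (\<lambda>\<omega>. fst \<omega> i) \<in> measurable sample P"
  unfolding sample_space_def
  by (intro measurable_compose[OF measurable_fst] measurable_component_singleton) auto

lemma F_stat_eq:
  assumes j: "j < k" and \<omega>: "\<omega> \<in> space sample"
  shows "F_stat PX P R A n k j \<omega>
    = 1 / sqrt (real n) * (\<Sum>i\<in>fold_idx n k j. centred (train j \<omega>) (fst (fst \<omega> i)))"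
proof -
  have "(\<integral>x. fbar P R A n k x \<partial>PX) = (\<integral>x. mean_pred x \<partial>PX)"
    by (rule Bochner_Integration.integral_cong) (auto simp: fbar_eq_mean_pred)
  moreover have "fbar P R A n k (fst (fst \<omega> i)) = mean_pred (fst (fst \<omega> i))"
    if "i \<in> fold_idx n k j" for i
    using fst_component_space[OF \<omega>] fold_idx_subset[OF j] that fbar_eq_mean_pred by auto
  ultimately show ?thesis by (simp add: F_stat_def fitted_eq_pred centred_def)
qed

lemma F_stat_measurable[measurable]: "j < k \<Longrightarrow> F_stat PX P R A n k j \<in> borel_measurable sample"
proof -
  assume j: "j < k"
  have "(\<lambda>\<omega>. centred (train j \<omega>) (fst (fst \<omega> i))) \<in> borel_measurable sample"
    if "i \<in> fold_idx n k j" for i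
  proof -
    have "i < n" using that fold_idx_subset[OF j] by auto
    then show ?thesis using j by measurable
  qed
  then have "(\<lambda>\<omega>. 1 / sqrt (real n) * (\<Sum>i\<in>fold_idx n k j. centred (train j \<omega>) (fst (fst \<omega> i))))
      \<in> borel_measurable sample"
    by measurable
  then show ?thesis by (subst measurable_cong[OF F_stat_eq[OF j]]) auto
qed

lemma nn_integral_fold_train:
  assumes j: "j < k"
    and g: "g \<in> borel_measurable (train_law \<Otimes>\<^sub>M PiM (fold_idx n k j) (\<lambda>_. P))"
  shows "(\<integral>\<^sup>+\<omega>. g (train j \<omega>, restrict (fst \<omega>) (fold_idx n k j)) \<partial>sample)
       = (\<integral>\<^sup>+\<tau>. \<integral>\<^sup>+a. g (\<tau>, a) \<partial>PiM (fold_idx n k j) (\<lambda>_. P) \<partial>train_law)"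
proof -
  define J where "J = {..<n} - fold_idx n k j"
  have IJ: "fold_idx n k j \<union> J = {..<n}" "fold_idx n k j \<inter> J = {}"
    using fold_idx_subset[OF j] unfolding J_def by auto
  have skip_J: "skip j \<in> {..< n - n div k} \<rightarrow> J"
    using skip_outside_fold[OF j] unfolding J_def .
  have train_merge: "train j (merge (fold_idx n k j) J (a, b), r) = train j (b, r)" for a b r
    using skip_J IJ(2) by (auto simp: train_def merge_def fun_eq_iff)
  show ?thesis
    unfolding sample_space_def IJ(1)[symmetric]
    by (rule nn_integral_merge_independent[OF P prob_space_PiM[OF R] IJ(2) _ _
          train_measurable[OF j] train_measurable[OF j skip_J] distr_train[OF j skip_J] train_merge g])
      (use IJ(1) skip_J in \<open>auto intro: finite_subset\<close>)
qed

lemma nn_integral_abs_F_stat_le: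
  assumes j: "j < k"
  shows "(\<integral>\<^sup>+\<omega>. ennreal \<bar>F_stat PX P R A n k j \<omega>\<bar> \<partial>sample)
      \<le> (\<integral>\<^sup>+\<tau>. ennreal (sqrt (excess_var \<tau> / real k)) \<partial>train_law)"
proof -
  define I where "I = fold_idx n k j"
  define c where "c = 1 / sqrt (real n)"
  have c: "0 \<le> c" unfolding c_def by simp
  define G where "G z = ennreal (c * \<bar>\<Sum>i\<in>I. centred (fst z) (fst (snd z i))\<bar>)"
    for z :: "((nat \<Rightarrow> 'x \<times> 'y) \<times> 'r) \<times> (nat \<Rightarrow> 'x \<times> 'y)"
  have G[measurable]: "G \<in> borel_measurable (train_law \<Otimes>\<^sub>M PiM I (\<lambda>_. P))"
    unfolding G_def I_def by measurable
  have "(\<integral>\<^sup>+\<omega>. ennreal \<bar>F_stat PX P R A n k j \<omega>\<bar> \<partial>sample)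
      = (\<integral>\<^sup>+\<omega>. G (train j \<omega>, restrict (fst \<omega>) I) \<partial>sample)"
    by (rule nn_integral_cong)
      (simp add: F_stat_eq[OF j] G_def I_def c_def abs_mult)
  also have "\<dots> = (\<integral>\<^sup>+\<tau>. \<integral>\<^sup>+a. G (\<tau>, a) \<partial>PiM I (\<lambda>_. P) \<partial>train_law)"
    unfolding I_def by (rule nn_integral_fold_train[OF j]) (simp add: I_def[symmetric])
  also have "\<dots> \<le> (\<integral>\<^sup>+\<tau>. ennreal (sqrt (excess_var \<tau> / real k)) \<partial>train_law)"
  proof (rule nn_integral_mono_AE)
    show "AE \<tau> in train_law. (\<integral>\<^sup>+a. G (\<tau>, a) \<partial>PiM I (\<lambda>_. P))
        \<le> ennreal (sqrt (excess_var \<tau> / real k))"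
      using AE_pred_square_integrable
    proof (rule AE_mp, intro AE_I2 impI)
      fix \<tau> assume \<tau>: "\<tau> \<in> space train_law"
        and \<tau>_square: "integrable PX (\<lambda>x. (pred (\<tau>, x))\<^sup>2)"
      have fin: "finite I" unfolding I_def fold_idx_eq by simp
      have "(\<integral>\<^sup>+a. G (\<tau>, a) \<partial>PiM I (\<lambda>_. P))
          = (\<integral>\<^sup>+a. ennreal c * ennreal \<bar>\<Sum>i\<in>I. centred \<tau> (fst (a i))\<bar> \<partial>PiM I (\<lambda>_. P))"
        unfolding G_def using c by (simp add: ennreal_mult)
      also have "\<dots> = ennreal c * (\<integral>\<^sup>+a. ennreal \<bar>\<Sum>i\<in>I. centred \<tau> (fst (a i))\<bar> \<partial>PiM I (\<lambda>_. P))"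
        by (rule nn_integral_cmult) (use \<tau> in measurable)
      also have "\<dots> \<le> ennreal c * ennreal (sqrt (real (card I) * excess_var \<tau>))"
        by (intro mult_left_mono nn_integral_abs_sum_centred_le[OF fin \<tau> \<tau>_square]) simp
      also have "\<dots> = ennreal (c * sqrt (real (card I) * excess_var \<tau>))"
        using c by (simp add: ennreal_mult')
      also have "\<dots> \<le> ennreal (sqrt (excess_var \<tau> / real k))"
        unfolding I_def card_fold_idx c_def
        by (intro ennreal_leI sqrt_scaled_le) (simp_all add: k_pos excess_var_nonneg)
      finally show "(\<integral>\<^sup>+a. G (\<tau>, a) \<partial>PiM I (\<lambda>_. P)) \<le> ennreal (sqrt (excess_var \<tau> / real k))" .
    qed
  qed
  finally show ?thesis .
qed

lemma varX_fitted_eq_excess_var: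
  "varX PX (\<lambda>x. fitted A n k j \<omega> x - fbar P R A n k x) = excess_var (train j \<omega>)"
proof -
  have "(\<integral>x. fitted A n k j \<omega> x - fbar P R A n k x \<partial>PX) = (\<integral>x. pred (train j \<omega>, x) - mean_pred x \<partial>PX)"
    by (rule Bochner_Integration.integral_cong) (auto simp: fbar_eq_mean_pred fitted_eq_pred)
  then show ?thesis
    unfolding excess_var_def varX_def
    by (intro Bochner_Integration.integral_cong) (auto simp: fbar_eq_mean_pred fitted_eq_pred)
qed

lemma nn_integral_abs_sum_F_stat_le:
  assumes integrable: "integrable sample
    (\<lambda>\<omega>. sqrt (real k * varX PX (\<lambda>x. fitted A n k 0 \<omega> x - fbar P R A n k x)))"
  shows "(\<integral>\<^sup>+\<omega>. ennreal \<bar>\<Sum>j<k. F_stat PX P R A n k j \<omega>\<bar> \<partial>sample)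
    \<le> ennreal (\<integral>\<omega>. sqrt (real k * varX PX (\<lambda>x. fitted A n k 0 \<omega> x - fbar P R A n k x)) \<partial>sample)"
proof -
  have "(\<integral>\<^sup>+\<omega>. ennreal \<bar>\<Sum>j<k. F_stat PX P R A n k j \<omega>\<bar> \<partial>sample)
      \<le> (\<integral>\<^sup>+\<omega>. (\<Sum>j<k. ennreal \<bar>F_stat PX P R A n k j \<omega>\<bar>) \<partial>sample)"
    by (rule nn_integral_mono) (simp add: ennreal_leI sum_abs)
  also have "\<dots> = (\<Sum>j<k. \<integral>\<^sup>+\<omega>. ennreal \<bar>F_stat PX P R A n k j \<omega>\<bar> \<partial>sample)"
    by (rule nn_integral_sum) simp
  also have "\<dots> \<le> (\<Sum>j<k. \<integral>\<^sup>+\<tau>. ennreal (sqrt (excess_var \<tau> / real k)) \<partial>train_law)"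
    by (rule sum_mono) (simp add: nn_integral_abs_F_stat_le)
  also have "\<dots> = (\<integral>\<^sup>+\<tau>. ennreal (real k) * ennreal (sqrt (excess_var \<tau> / real k)) \<partial>train_law)"
    by (simp add: nn_integral_cmult ennreal_of_nat_eq_real_of_nat)
  also have "\<dots> = (\<integral>\<^sup>+\<tau>. ennreal (sqrt (real k * excess_var \<tau>)) \<partial>train_law)"
    by (rule nn_integral_cong) (simp add: ennreal_mult'[symmetric] mult_sqrt_divide_self k_pos)
  also have "\<dots> = (\<integral>\<^sup>+\<omega>. ennreal (sqrt (real k * excess_var (train 0 \<omega>))) \<partial>sample)"
  proof -
    have "(\<lambda>\<tau>. ennreal (sqrt (real k * excess_var \<tau>))) \<in> borel_measurable train_law" by measurable
    then show ?thesis
      using nn_integral_distr[OF train_measurable_sample[OF k_pos],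
          of "\<lambda>\<tau>. ennreal (sqrt (real k * excess_var \<tau>))"]
      by (simp add: distr_train_sample[OF k_pos])
  qed
  also have "\<dots> = ennreal (\<integral>\<omega>. sqrt (real k * varX PX (\<lambda>x. fitted A n k 0 \<omega> x - fbar P R A n k x)) \<partial>sample)"
    unfolding varX_fitted_eq_excess_var
    by (rule nn_integral_eq_integral)
      (use integrable in \<open>simp_all add: varX_fitted_eq_excess_var excess_var_nonneg\<close>)
  finally show ?thesis .
qed

lemma measure_abs_sum_F_stat_gt_le:
  assumes "integrable sample
    (\<lambda>\<omega>. sqrt (real k * varX PX (\<lambda>x. fitted A n k 0 \<omega> x - fbar P R A n k x)))"
    and "0 < \<epsilon>"
  shows "measure sample {\<omega> \<in> space sample. \<epsilon> < \<bar>\<Sum>j<k. F_stat PX P R A n k j \<omega>\<bar>}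
    \<le> (\<integral>\<omega>. sqrt (real k * varX PX (\<lambda>x. fitted A n k 0 \<omega> x - fbar P R A n k x)) \<partial>sample) / \<epsilon>"
  by (rule sample.measure_abs_gt_le_nn_integral[OF _ nn_integral_abs_sum_F_stat_le[OF assms(1)] _ assms(2)])
    (simp_all add: varX_def integral_nonneg)

end

theorem lemma2:
  fixes PX :: "'x measure" and MY :: "'y measure" and P :: "('x \<times> 'y) measure"
    and R :: "nat \<Rightarrow> 'r measure"
    and A :: "nat \<Rightarrow> (nat \<Rightarrow> 'x \<times> 'y) \<Rightarrow> 'r \<Rightarrow> 'x \<Rightarrow> real"
    and N K :: "nat \<Rightarrow> nat"
  assumes P: "prob_space P" and sets_P: "sets P = sets (PX \<Otimes>\<^sub>M MY)"
    and PX: "distr P PX fst = PX"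
    and R: "\<And>m. prob_space (R m)"
    and K_pos: "\<And>m. 1 \<le> K m" and K_dvd: "\<And>m. K m dvd N m"
    and N_lim: "filterlim N at_top sequentially"
    and A_meas: "\<And>m. (\<lambda>((d, r), x). A m d r x) \<in> borel_measurable
        ((PiM {..< N m - N m div K m} (\<lambda>_. P) \<Otimes>\<^sub>M R m) \<Otimes>\<^sub>M PX)"
    and second_moment: "\<And>m. integrable
        ((PiM {..< N m - N m div K m} (\<lambda>_. P) \<Otimes>\<^sub>M R m) \<Otimes>\<^sub>M PX)
        (\<lambda>((d, r), x). (A m d r x)\<^sup>2)"
    and stable_int: "\<And>m. integrable (sample_space P (R m) (N m) (K m))
        (\<lambda>\<omega>. sqrt (real (K m) * varX PX (\<lambda>x. fitted (A m) (N m) (K m) 0 \<omega> x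
                                           - fbar P (R m) (A m) (N m) (K m) x)))"
    and stable: "(\<lambda>m. \<integral>\<omega>. sqrt (real (K m) * varX PX (\<lambda>x. fitted (A m) (N m) (K m) 0 \<omega> x
                                           - fbar P (R m) (A m) (N m) (K m) x))
                     \<partial>sample_space P (R m) (N m) (K m)) \<longlonglongrightarrow> 0"
  shows "\<forall>\<epsilon>>0. (\<lambda>m. measure (sample_space P (R m) (N m) (K m))
            {\<omega> \<in> space (sample_space P (R m) (N m) (K m)).
               \<bar>\<Sum>j<K m. F_stat PX P (R m) (A m) (N m) (K m) j \<omega>\<bar> > \<epsilon>}) \<longlonglongrightarrow> 0"
proof (intro allI impI)
  \<comment> \<open>The Markov bound below holds for every \<open>N m\<close> and \<open>K m\<close>.\<close>
  fix \<epsilon> :: real assume \<epsilon>: "\<epsilon> > 0"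
  define B where "B m = (\<integral>\<omega>. sqrt (real (K m) * varX PX (\<lambda>x. fitted (A m) (N m) (K m) 0 \<omega> x
      - fbar P (R m) (A m) (N m) (K m) x)) \<partial>sample_space P (R m) (N m) (K m))" for m
  have bound: "measure (sample_space P (R m) (N m) (K m))
      {\<omega> \<in> space (sample_space P (R m) (N m) (K m)).
        \<bar>\<Sum>j<K m. F_stat PX P (R m) (A m) (N m) (K m) j \<omega>\<bar> > \<epsilon>} \<le> B m / \<epsilon>" for m
  proof -
    interpret cross_fitting PX MY P "R m" "A m" "N m" "K m"
      using K_pos[of m] by (intro cross_fitting.intro[OF P sets_P PX R _ A_meas second_moment]) simp
    show ?thesis
      unfolding B_def by (rule measure_abs_sum_F_stat_gt_le[OF stable_int \<epsilon>])
  qed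
  have lim: "(\<lambda>m. B m / \<epsilon>) \<longlonglongrightarrow> 0"
    using tendsto_divide[OF stable tendsto_const[of \<epsilon>]] \<epsilon> unfolding B_def by simp
  show "(\<lambda>m. measure (sample_space P (R m) (N m) (K m))
      {\<omega> \<in> space (sample_space P (R m) (N m) (K m)).
        \<bar>\<Sum>j<K m. F_stat PX P (R m) (A m) (N m) (K m) j \<omega>\<bar> > \<epsilon>}) \<longlonglongrightarrow> 0"
  proof (rule real_tendsto_sandwich[OF _ _ tendsto_const lim])
    show "\<forall>\<^sub>F m in sequentially. measure (sample_space P (R m) (N m) (K m))
        {\<omega> \<in> space (sample_space P (R m) (N m) (K m)).
          \<bar>\<Sum>j<K m. F_stat PX P (R m) (A m) (N m) (K m) j \<omega>\<bar> > \<epsilon>} \<le> B m / \<epsilon>"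
      using bound by (intro always_eventually allI)
  qed simp
qed

end
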